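(* Let $(X,d)$ be a compact metric space with $\dim X=0$ and let $f\in\mathcal{H}(X)$ be equicontinuous. Then $f$ has the continuous shadowing property.
   Context: $\mathcal{H}(X)$ is the set of homeomorphisms of $X$. $f$ is equicontinuous if for every $\epsilon>0$ there is $\delta>0$ such that $d(x,y)\le\delta$ implies $\sup_{i\in\mathbb{Z}}d(f^i(x),f^i(y))\le\epsilon$. On $X^{\mathbb{Z}}$ use the metric $\tilde d(x,y)=\sup_{i\in\mathbb{Z}}2^{-|i|}d(x_i,y_i)$. For $\delta>0$, $P(f,\delta)\subset X^{\mathbb{Z}}$ is the set of bi-infinite $\delta$-pseudo orbits, i.e. sequences $(x_i)_{i\in\mathbb{Z}}$ with $d(f(x_i),x_{i+1})\le\delta$ for all $i\in\mathbb{Z}$. $f$ has the continuous shadowing property if for every $\epsilon>0$ there are $\delta>0$ and a continuous map $r:P(f,\delta)\to X$ with $d(f^i(r(x)),x_i)\le\epsilon$ for all $x=(x_i)_{i\in\mathbb{Z}}\in P(f,\delta)$ and all $i\in\mathbb{Z}$. *)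

theory Defs
  imports "HOL-Analysis.Analysis"
begin

text \<open>The space X is the whole carrier of a metric-space type 'a.\<close>

definition is_homeo :: "('a::metric_space \<Rightarrow> 'a) \<Rightarrow> bool" where
  "is_homeo f \<longleftrightarrow> (\<exists>g. homeomorphism UNIV UNIV f g)"

definition zpow :: "('a \<Rightarrow> 'a) \<Rightarrow> int \<Rightarrow> 'a \<Rightarrow> 'a" where
  "zpow f i = (if 0 \<le> i then f ^^ nat i else (inv f) ^^ nat (- i))"

text \<open>Zero-dimensionality: a base of clopen sets (small inductive dimension 0).\<close>
definition zero_dimensional :: "'a::topological_space itself \<Rightarrow> bool" where
  "zero_dimensional _ \<longleftrightarrow>
     (\<forall>U (x::'a). open U \<longrightarrow> x \<in> U \<longrightarrow> (\<exists>V. open V \<and> closed V \<and> x \<in> V \<and> V \<subseteq> U))"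

definition equicontinuous :: "('a::metric_space \<Rightarrow> 'a) \<Rightarrow> bool" where
  "equicontinuous f \<longleftrightarrow> (\<forall>\<epsilon>>0. \<exists>\<delta>>0. \<forall>x y. dist x y \<le> \<delta> \<longrightarrow>
       (SUP i. dist (zpow f i x) (zpow f i y)) \<le> \<epsilon>)"

definition seq_dist :: "(int \<Rightarrow> 'a::metric_space) \<Rightarrow> (int \<Rightarrow> 'a) \<Rightarrow> real" where
  "seq_dist x y = (SUP i. (1/2) ^ nat \<bar>i\<bar> * dist (x i) (y i))"

definition pseudo_orbits :: "('a::metric_space \<Rightarrow> 'a) \<Rightarrow> real \<Rightarrow> (int \<Rightarrow> 'a) set" where
  "pseudo_orbits f \<delta> = {x. \<forall>i. dist (f (x i)) (x (i + 1)) \<le> \<delta>}"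

definition seq_continuous_on :: "(int \<Rightarrow> 'a::metric_space) set \<Rightarrow> ((int \<Rightarrow> 'a) \<Rightarrow> 'a) \<Rightarrow> bool" where
  "seq_continuous_on P r \<longleftrightarrow> (\<forall>x\<in>P. \<forall>e>0. \<exists>\<eta>>0. \<forall>y\<in>P. seq_dist x y < \<eta> \<longrightarrow> dist (r x) (r y) < e)"

definition continuous_shadowing :: "('a::metric_space \<Rightarrow> 'a) \<Rightarrow> bool" where
  "continuous_shadowing f \<longleftrightarrow> (\<forall>\<epsilon>>0. \<exists>\<delta>>0. \<exists>r. seq_continuous_on (pseudo_orbits f \<delta>) r \<and>
       (\<forall>x\<in>pseudo_orbits f \<delta>. \<forall>i. dist (zpow f i (r x)) (x i) \<le> \<epsilon>))"

end

theory Submission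
  imports Defs
begin

text \<open>A compact zero-dimensional space admits, for every \<open>\<epsilon> > 0\<close>, a finite partition into
  clopen sets of diameter at most \<open>\<epsilon>\<close>; by compactness there is \<open>l > 0\<close> such that points at
  distance \<open>< l\<close> lie in the same block.  Equicontinuity provides \<open>\<delta> > 0\<close> such that all iterates
  of \<open>\<delta>\<close>-close points stay \<open>l\<close>-close, hence in the same block.  Induction along a \<open>\<delta>\<close>-pseudo
  orbit \<open>x\<close> then shows that \<open>f^i(x_0)\<close> and \<open>x_i\<close> share a block for every \<open>i\<close>, so the
  projection \<open>x \<mapsto> x_0\<close> is a continuous shadowing map.\<close>

lemma zpow_0 [simp]: "zpow f 0 x = x"
  by (simp add: zpow_def)

lemma zpow_add_one_right:
  assumes "inj f"
  shows "zpow f (i + 1) x = zpow f i (f x)"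
proof (cases "0 \<le> i")
  case True
  then have "nat (i + 1) = Suc (nat i)" by simp
  with True show ?thesis by (simp add: zpow_def funpow_swap1)
next
  case False
  then have "nat (- i) = Suc (nat (- (i + 1)))" by simp
  with False assms show ?thesis by (simp add: zpow_def funpow_Suc_right del: funpow.simps)
qed

lemma clopen_uniformly_locally_constant:
  fixes V :: "'a::metric_space set"
  assumes "compact (UNIV :: 'a set)" "open V" "closed V"
  shows "eventually (\<lambda>(x, y). x \<in> V \<longleftrightarrow> y \<in> V) uniformity"
proof -
  have cover: "UNIV \<subseteq> \<Union>{V, -V}" by auto
  have "\<And>G. G \<in> {V, -V} \<Longrightarrow> open G" using assms(2,3) by auto
  then obtain e where "e > 0" and e: "\<And>x. x \<in> UNIV \<Longrightarrow> \<exists>G \<in> {V, -V}. ball x e \<subseteq> G"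
    using Heine_Borel_lemma[OF assms(1) cover] by blast
  have "x \<in> V \<longleftrightarrow> y \<in> V" if "dist x y < e" for x y
  proof -
    have "x \<in> ball x e" "y \<in> ball x e" using that \<open>e > 0\<close> by auto
    with e[of x] show ?thesis by blast
  qed
  with \<open>e > 0\<close> show ?thesis unfolding eventually_uniformity_metric by blast
qed

text \<open>The block of \<open>x\<close> is coded by the set of members of a finite clopen cover containing \<open>x\<close>.\<close>

lemma compact_zero_dimensional_small_clopen_code:
  fixes \<epsilon> :: real
  assumes "compact (UNIV :: 'a::metric_space set)" "zero_dimensional TYPE('a)" "\<epsilon> > 0"
  obtains \<phi> :: "'a::metric_space \<Rightarrow> 'a set set"
  where "\<And>x y. \<phi> x = \<phi> y \<Longrightarrow> dist x y \<le> \<epsilon>"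
    and "eventually (\<lambda>(x, y). \<phi> x = \<phi> y) uniformity"
proof -
  have "\<forall>x::'a. \<exists>V. open V \<and> closed V \<and> x \<in> V \<and> V \<subseteq> ball x (\<epsilon>/2)"
  proof
    fix x :: 'a
    have "open (ball x (\<epsilon>/2))" "x \<in> ball x (\<epsilon>/2)" using \<open>\<epsilon> > 0\<close> by auto
    with assms(2) show "\<exists>V. open V \<and> closed V \<and> x \<in> V \<and> V \<subseteq> ball x (\<epsilon>/2)"
      unfolding zero_dimensional_def by blast
  qed
  then obtain W where W: "\<And>x::'a. open (W x) \<and> closed (W x) \<and> x \<in> W x \<and> W x \<subseteq> ball x (\<epsilon>/2)"
    by metis
  have "\<And>x. open (W x)" "UNIV \<subseteq> (\<Union>x. W x)" using W by blast+
  then obtain T where "finite T" and T: "UNIV \<subseteq> (\<Union>t\<in>T. W t)"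
    by (metis compactE_image[OF assms(1)])
  define \<phi> where "\<phi> x = {V \<in> W ` T. x \<in> V}" for x
  show thesis
  proof
    fix x y assume "\<phi> x = \<phi> y"
    obtain t where "t \<in> T" "x \<in> W t" using T by blast
    with \<open>\<phi> x = \<phi> y\<close> have "y \<in> W t" by (auto simp: \<phi>_def)
    with \<open>x \<in> W t\<close> W[of t] have "dist t x < \<epsilon>/2" "dist t y < \<epsilon>/2" by auto
    then show "dist x y \<le> \<epsilon>" using dist_triangle3[of x y t] by linarith
  next
    have "\<forall>V\<in>W ` T. eventually (\<lambda>(x, y). x \<in> V \<longleftrightarrow> y \<in> V) uniformity"
      using W clopen_uniformly_locally_constant[OF assms(1)] by blast
    then have "eventually (\<lambda>p. \<forall>V\<in>W ` T. (\<lambda>(x, y). x \<in> V \<longleftrightarrow> y \<in> V) p) uniformity"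
      using \<open>finite T\<close> by (intro eventually_ball_finite) auto
    then show "eventually (\<lambda>(x, y). \<phi> x = \<phi> y) uniformity"
      by (rule eventually_mono) (auto simp: \<phi>_def)
  qed
qed

text \<open>Boundedness is needed: the supremum in \<open>equicontinuous\<close> is otherwise a junk value.\<close>

lemma equicontinuous_iterates:
  assumes "bounded (UNIV :: 'a::metric_space set)" "equicontinuous (f :: 'a \<Rightarrow> 'a)" "\<epsilon> > 0"
  obtains \<delta> where "\<delta> > 0" and "\<And>x y i. dist x y \<le> \<delta> \<Longrightarrow> dist (zpow f i x) (zpow f i y) \<le> \<epsilon>"
proof -
  obtain \<delta> where "\<delta> > 0" and \<delta>: "\<And>x y. dist x y \<le> \<delta> \<Longrightarrow> (SUP i. dist (zpow f i x) (zpow f i y)) \<le> \<epsilon>"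
    using assms(2,3) unfolding equicontinuous_def by blast
  have "bdd_above (range (\<lambda>i. dist (zpow f i x) (zpow f i y)))" for x y
    by (rule bdd_aboveI2[where M = "diameter (UNIV :: 'a set)"]) (simp add: diameter_bounded_bound[OF assms(1)])
  then have "dist (zpow f i x) (zpow f i y) \<le> (SUP i. dist (zpow f i x) (zpow f i y))" for x y i
    by (rule cSUP_upper[OF UNIV_I])
  with \<delta> \<open>\<delta> > 0\<close> show thesis by (meson order_trans that)
qed

lemma dist_le_seq_dist:
  assumes "bounded (UNIV :: 'a::metric_space set)"
  shows "(1/2) ^ nat \<bar>i\<bar> * dist (x i) (y i :: 'a) \<le> seq_dist x y"
  unfolding seq_dist_def
proof (rule cSUP_upper)
  have "(1/2) ^ nat \<bar>j\<bar> * dist (x j) (y j) \<le> 1 * diameter (UNIV :: 'a set)" for j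
    by (rule mult_mono) (simp_all add: power_le_one diameter_bounded_bound[OF assms])
  then show "bdd_above (range (\<lambda>j. (1/2) ^ nat \<bar>j\<bar> * dist (x j) (y j)))"
    by (rule bdd_aboveI2)
qed simp

lemma seq_continuous_on_eval:
  assumes "bounded (UNIV :: 'a::metric_space set)"
  shows "seq_continuous_on (P :: (int \<Rightarrow> 'a) set) (\<lambda>x. x i)"
  unfolding seq_continuous_on_def
proof (intro ballI allI impI)
  fix x :: "int \<Rightarrow> 'a" and e :: real assume "e > 0"
  let ?w = "(1/2::real) ^ nat \<bar>i\<bar>"
  have "?w > 0" by simp
  have "dist (x i) (y i) < e" if "seq_dist x y < e * ?w" for y
  proof -
    have "?w * dist (x i) (y i) \<le> seq_dist x y" by (rule dist_le_seq_dist[OF assms])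
    also have "\<dots> < ?w * e" using that by (simp add: mult.commute)
    finally show ?thesis using \<open>?w > 0\<close> by simp
  qed
  with \<open>e > 0\<close> \<open>?w > 0\<close> show "\<exists>\<eta>>0. \<forall>y\<in>P. seq_dist x y < \<eta> \<longrightarrow> dist (x i) (y i) < e"
    by (intro exI[of _ "e * ?w"]) auto
qed

lemma pseudo_orbit_code_tracks_orbit:
  assumes "inj f"
    and step: "\<And>i j. \<phi> (zpow f j (f (x i))) = \<phi> (zpow f j (x (i + 1)))"
  shows "\<phi> (zpow f i (x 0)) = \<phi> (x i)"
proof -
  have "\<phi> (zpow f (j + i) (x 0)) = \<phi> (zpow f j (x i))" for j
  proof (induction i arbitrary: j rule: int_induct[where k = 0])
    case base
    show ?case by simp
  next
    case (step1 i)
    have "\<phi> (zpow f (j + (i + 1)) (x 0)) = \<phi> (zpow f (j + 1) (x i))"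
      using step1(2)[of "j + 1"] by (simp add: add_ac)
    also have "\<dots> = \<phi> (zpow f j (x (i + 1)))"
      using step zpow_add_one_right[OF \<open>inj f\<close>] by simp
    finally show ?case .
  next
    case (step2 i)
    have "\<phi> (zpow f (j + (i - 1)) (x 0)) = \<phi> (zpow f (j - 1) (x i))"
      using step2(2)[of "j - 1"] by (simp add: algebra_simps)
    also have "\<dots> = \<phi> (zpow f j (x (i - 1)))"
      using step[of "j - 1" "i - 1"] zpow_add_one_right[OF \<open>inj f\<close>, of "j - 1"] by simp
    finally show ?case .
  qed
  from this[of 0] show ?thesis by simp
qed

theorem lemma3p2:
  fixes f :: "'a::metric_space \<Rightarrow> 'a"
  assumes "compact (UNIV :: 'a set)"
    and "zero_dimensional TYPE('a)"
    and "is_homeo f"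
    and "equicontinuous f"
  shows "continuous_shadowing f"
  unfolding continuous_shadowing_def
proof (intro allI impI)
  fix \<epsilon> :: real assume "\<epsilon> > 0"
  obtain g where "homeomorphism UNIV UNIV f g" using assms(3) unfolding is_homeo_def by blast
  then have "inj f" by (metis homeomorphism_apply1 UNIV_I injI)
  have bounded: "bounded (UNIV :: 'a set)" using assms(1) by (rule compact_imp_bounded)
  obtain \<phi> :: "'a \<Rightarrow> 'a set set" and l where "l > 0"
    and \<phi>_small: "\<And>x y. \<phi> x = \<phi> y \<Longrightarrow> dist x y \<le> \<epsilon>"
    and \<phi>_const: "\<And>x y. dist x y < l \<Longrightarrow> \<phi> x = \<phi> y"
    using compact_zero_dimensional_small_clopen_code[OF assms(1,2) \<open>\<epsilon> > 0\<close>]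
    by (metis (mono_tags, lifting) case_prod_conv eventually_uniformity_metric)
  obtain \<delta> where "\<delta> > 0" and \<delta>: "\<And>x y i. dist x y \<le> \<delta> \<Longrightarrow> dist (zpow f i x) (zpow f i y) \<le> l/2"
    using equicontinuous_iterates[OF bounded assms(4)] \<open>l > 0\<close> half_gt_zero by blast
  have "dist (zpow f i (x 0)) (x i) \<le> \<epsilon>" if "x \<in> pseudo_orbits f \<delta>" for x i
  proof (rule \<phi>_small, rule pseudo_orbit_code_tracks_orbit[OF \<open>inj f\<close>])
    fix i j
    have "dist (f (x i)) (x (i + 1)) \<le> \<delta>" using that by (simp add: pseudo_orbits_def)
    then have "dist (zpow f j (f (x i))) (zpow f j (x (i + 1))) \<le> l/2" by (rule \<delta>)
    then have "dist (zpow f j (f (x i))) (zpow f j (x (i + 1))) < l" using \<open>l > 0\<close> by linarith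
    then show "\<phi> (zpow f j (f (x i))) = \<phi> (zpow f j (x (i + 1)))" by (rule \<phi>_const)
  qed
  with \<open>\<delta> > 0\<close> seq_continuous_on_eval[OF bounded]
  show "\<exists>\<delta>>0. \<exists>r. seq_continuous_on (pseudo_orbits f \<delta>) r \<and>
          (\<forall>x\<in>pseudo_orbits f \<delta>. \<forall>i. dist (zpow f i (r x)) (x i) \<le> \<epsilon>)"
    by blast
qed

end
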